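(* Consider $N\ge2$ agents $V=\{1,\dots,N\}$ with states $\mathbf x(t)\in\mathbb{R}^N$ evolving according to $$\dot{\mathbf x}(t)=-L(t)\mathbf x(t)+\mathbf u(t),$$ i.e. $\dot x_i=\sum_{j\in\mathcal N_i}|a_{ij}(t)|(\operatorname{sgn}(a_{ij}(t))x_j-x_i)+u_i$, over a time-varying signed interaction graph $\mathcal G_A(t)$ that is uniformly quasi strongly $\delta$-connected (with constant $T>0$) and whose coefficients satisfy (A1)–(A3) below. Suppose that for every $t\ge0$ the union graph $G_\delta[t,t+T)$ contains a fixed node set $S\subseteq V$ that forms a root node set (there is a $\delta$-path in $G_\delta[t,t+T)$ from $S$ to every other node), and that the subgraph induced by $S$ is persistently structurally balanced. Let $\mathbf x_d\in\mathbb{R}^N$ be any desired state and apply the control input $$\mathbf u(t)=L(t)\mathbf x_d-K(t)\bigl(\mathbf x(t)-\mathbf x_d\bigr),\qquad K(t)=\operatorname{diag}(k_1(t),\dots,k_N(t)),$$ where (P1) each $k_i(\cdot)$ is continuous for almost all $t\ge t_0$ (its discontinuities form a set of Lebesgue measure zero), and (P2) there exists $\underline\kappa>0$ such that $k_i(t)\in[\underline\kappa,\infty)$ for $i\in S$ and $k_j(t)\equiv0$ for $j\notin S$, for all $t\ge t_0$. Then the closed-loop system achieves the desired steady state: $\mathbf x(t)\to\mathbf x_d$ as $t\to\infty$.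
   Context: $t_0\ge0$ is the initial time. $\operatorname{sgn}$ is the sign function; $a_{ij}(t)\in\mathbb{R}$ is the signed influence of agent $j$ on agent $i$; $\mathcal N_i$ is the set of incoming neighbors of $i$. $L(t)$ is the signed Laplacian: $[L(t)]_{ii}=\sum_{k\in\mathcal N_i}|a_{ik}(t)|$, $[L(t)]_{ij}=-a_{ij}(t)$ for $i\neq j$. Solutions are understood in the Carathéodory (absolutely continuous) sense. Assumptions: (A1) each $a_{ij}(t)$ is piecewise continuous on every compact interval with discontinuity set of Lebesgue measure zero; (A2) $a_{ii}\equiv0$; (A3) there is $M_0>0$ with $\int_{t_1}^{t_2}|a_{ij}(s)|\,ds\le M_0(t_2-t_1)$ for all $t_1\le t_2$. Graph notions: for $\delta>0$, a $\delta$-arc from $j$ to $i$ on $[t_1,t_2)$ means $\int_{t_1}^{t_2}|a_{ij}(t)|\,dt\ge\delta(t_2-t_1)$; a $\delta$-path on $[t_1,t_2)$ is a directed path of $\delta$-arcs on $[t_1,t_2)$; $G_\delta[t_1,t_2)$ is the digraph on $V$ whose arcs are the $\delta$-arcs on $[t_1,t_2)$, and $G_\delta^\infty$ is the union of all $\delta$-arcs appearing over $[0,\infty)$; condensation graphs have strongly connected components (SCCs) as nodes, and an SCC is closed if it has no incoming arcs from other SCCs. $\mathcal G_A(t)$ is uniformly quasi strongly $\delta$-connected if there is $T>0$ such that for every $t\ge0$ the condensation graph of $G_\delta[t,t+T)$ has a root node with a $\delta$-path to every other node. Persistent structural balance: when $\mathcal G_A(t)$ is uniformly quasi strongly $\delta$-connected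 and the condensation graph of $G_\delta^\infty$ contains a fixed node set $S$ forming a closed SCC, this SCC is persistently structurally balanced if for all $t\ge0$ there exists a unique bipartition $S=V_1^s\cup V_2^s$, $V_1^s\cap V_2^s=\varnothing$, such that $a_{jk}(t)\ge0$ whenever $j,k$ lie in the same part and $a_{jk}(t)\le0$ whenever $j,k$ lie in different parts. *)

theory Defs
  imports "HOL-Analysis.Analysis"
begin

text \<open>Agents are the elements of a finite type 'n. Coefficients a i j t = a_ij(t)
  (influence of agent j on agent i). Vectors in R^N are functions 'n => real.\<close>

definition signed_lap :: "('n::finite \<Rightarrow> 'n \<Rightarrow> real \<Rightarrow> real) \<Rightarrow> real \<Rightarrow> 'n \<Rightarrow> 'n \<Rightarrow> real" where
  "signed_lap a t i j = (if i = j then (\<Sum>k\<in>{k. a i k t \<noteq> 0}. \<bar>a i k t\<bar>) else - a i j t)"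

definition mat_vec :: "('n::finite \<Rightarrow> 'n \<Rightarrow> real) \<Rightarrow> ('n \<Rightarrow> real) \<Rightarrow> 'n \<Rightarrow> real" where
  "mat_vec M v i = (\<Sum>j\<in>UNIV. M i j * v j)"

definition delta_arc :: "('n \<Rightarrow> 'n \<Rightarrow> real \<Rightarrow> real) \<Rightarrow> real \<Rightarrow> real \<Rightarrow> real \<Rightarrow> 'n \<Rightarrow> 'n \<Rightarrow> bool" where
  "delta_arc a \<delta> t1 t2 j i \<longleftrightarrow> integral {t1..<t2} (\<lambda>s. \<bar>a i j s\<bar>) \<ge> \<delta> * (t2 - t1)"

text \<open>G_delta[t1,t2): arcs (j,i) meaning j -> i.\<close>
definition G_delta :: "('n \<Rightarrow> 'n \<Rightarrow> real \<Rightarrow> real) \<Rightarrow> real \<Rightarrow> real \<Rightarrow> real \<Rightarrow> ('n \<times> 'n) set" where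
  "G_delta a \<delta> t1 t2 = {(j, i). delta_arc a \<delta> t1 t2 j i}"

definition G_delta_inf :: "('n \<Rightarrow> 'n \<Rightarrow> real \<Rightarrow> real) \<Rightarrow> real \<Rightarrow> ('n \<times> 'n) set" where
  "G_delta_inf a \<delta> = {(j, i). \<exists>t1 t2. 0 \<le> t1 \<and> t1 < t2 \<and> delta_arc a \<delta> t1 t2 j i}"

definition scc :: "('n \<times> 'n) set \<Rightarrow> 'n \<Rightarrow> 'n set" where
  "scc R v = {u. (v, u) \<in> R\<^sup>* \<and> (u, v) \<in> R\<^sup>*}"

definition cond_nodes :: "('n \<times> 'n) set \<Rightarrow> 'n set set" where
  "cond_nodes R = range (scc R)"

definition cond_arcs :: "('n \<times> 'n) set \<Rightarrow> ('n set \<times> 'n set) set" where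
  "cond_arcs R = {(C, D). C \<in> cond_nodes R \<and> D \<in> cond_nodes R \<and> C \<noteq> D \<and>
                     (\<exists>u\<in>C. \<exists>v\<in>D. (u, v) \<in> R)}"

definition cond_has_root :: "('n \<times> 'n) set \<Rightarrow> bool" where
  "cond_has_root R \<longleftrightarrow> (\<exists>C\<in>cond_nodes R. \<forall>D\<in>cond_nodes R. (C, D) \<in> (cond_arcs R)\<^sup>*)"

definition closed_scc :: "('n \<times> 'n) set \<Rightarrow> 'n set \<Rightarrow> bool" where
  "closed_scc R S \<longleftrightarrow> S \<in> cond_nodes R \<and> (\<forall>D\<in>cond_nodes R. (D, S) \<notin> cond_arcs R)"

definition unif_quasi_strongly_connected ::
  "('n \<Rightarrow> 'n \<Rightarrow> real \<Rightarrow> real) \<Rightarrow> real \<Rightarrow> real \<Rightarrow> bool" where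
  "unif_quasi_strongly_connected a \<delta> T \<longleftrightarrow> T > 0 \<and> (\<forall>t\<ge>0. cond_has_root (G_delta a \<delta> t (t + T)))"

definition root_set :: "('n \<times> 'n) set \<Rightarrow> 'n set \<Rightarrow> bool" where
  "root_set R S \<longleftrightarrow> (\<forall>v. v \<notin> S \<longrightarrow> (\<exists>s\<in>S. (s, v) \<in> R\<^sup>*))"

definition balanced_bipartition ::
  "('n \<Rightarrow> 'n \<Rightarrow> real \<Rightarrow> real) \<Rightarrow> 'n set \<Rightarrow> real \<Rightarrow> 'n set \<Rightarrow> 'n set \<Rightarrow> bool" where
  "balanced_bipartition a S t V1 V2 \<longleftrightarrow> S = V1 \<union> V2 \<and> V1 \<inter> V2 = {} \<and>
     (\<forall>j\<in>S. \<forall>k\<in>S. ((j \<in> V1 \<longleftrightarrow> k \<in> V1) \<longrightarrow> a j k t \<ge> 0) \<and>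
                  ((j \<in> V1 \<longleftrightarrow> k \<in> V2) \<longrightarrow> a j k t \<le> 0))"

definition persistently_structurally_balanced ::
  "('n \<Rightarrow> 'n \<Rightarrow> real \<Rightarrow> real) \<Rightarrow> real \<Rightarrow> real \<Rightarrow> 'n set \<Rightarrow> bool" where
  "persistently_structurally_balanced a \<delta> T S \<longleftrightarrow>
     unif_quasi_strongly_connected a \<delta> T \<and> closed_scc (G_delta_inf a \<delta>) S \<and>
     (\<forall>t\<ge>0. \<exists>V1 V2. balanced_bipartition a S t V1 V2 \<and>
        (\<forall>W1 W2. balanced_bipartition a S t W1 W2 \<longrightarrow>
            (W1 = V1 \<and> W2 = V2) \<or> (W1 = V2 \<and> W2 = V1)))"

definition carath_solution ::
  "real \<Rightarrow> (real \<Rightarrow> ('n \<Rightarrow> real) \<Rightarrow> 'n \<Rightarrow> real) \<Rightarrow> (real \<Rightarrow> 'n \<Rightarrow> real) \<Rightarrow> bool" where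
  "carath_solution t0 f x \<longleftrightarrow> (\<forall>i. \<forall>t\<ge>t0.
      (\<lambda>s. f s (x s) i) absolutely_integrable_on {t0..t} \<and>
      x t i = x t0 i + integral {t0..t} (\<lambda>s. f s (x s) i))"

end

theory Submission
  imports Defs
begin

text \<open>Let e = x - xd. The closed loop reads e' = -(D + K) e + A e, where D is the diagonal of
  absolute in-degrees d_j = \<Sum>_l |a_jl|. Hence for \<sigma> = \<plusminus>1 and any level m
    \<sigma> e_j' \<le> d_j (m - \<sigma> e_j) - k_j \<sigma> e_j - \<Sum>_l |a_jl| (m - |e_l|).
  On a time step short enough that d_j integrates to at most 1/4, this barrier estimate
  shows that the maximum norm of e never increases, that a coordinate lying a fraction
  below the bound m stays (a smaller fraction) below it, that a pinned node (k_j \<ge> \<kappa>) is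
  pushed a fixed fraction below m, and that the head of a \<delta>-arc whose tail lies below m
  is pulled below m as well. Since S is a root set of the \<delta>-graph of every window of
  length T, after N windows all nodes lie a fixed fraction below m, so e decays
  geometrically. The couplings enter only through |a_jl|.\<close>

lemma integral_atLeastLessThan_eq_Icc:
  fixes f :: "real \<Rightarrow> 'a::banach"
  shows "integral {a..<b} f = integral {a..b} f"
proof (rule integral_spike_set)
  show "negligible {x \<in> {a..<b} - {a..b}. f x \<noteq> 0}" by (rule empty_imp_negligible) auto
  show "negligible {x \<in> {a..b} - {a..<b}. f x \<noteq> 0}"
    by (rule negligible_subset[of "{b}"]) auto
qed

lemma integral_equal_pieces:
  fixes f :: "real \<Rightarrow> real"
  assumes f: "\<And>p q. p \<le> q \<Longrightarrow> f integrable_on {p..q}" and "0 \<le> h"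
  shows "integral {w..w + real n * h} f = (\<Sum>i<n. integral {w + real i * h..w + real (Suc i) * h} f)"
proof (induction n)
  case (Suc n)
  have "integral {w..w + real n * h} f + integral {w + real n * h..w + real (Suc n) * h} f
        = integral {w..w + real (Suc n) * h} f"
    using \<open>0 \<le> h\<close> by (intro Henstock_Kurzweil_Integration.integral_combine f) (auto simp: distrib_right)
  then show ?case using Suc by simp
qed simp

lemma ex_ge_of_sum_ge:
  fixes X :: "nat \<Rightarrow> real"
  assumes "0 < n" "real n * b \<le> (\<Sum>i<n. X i)"
  shows "\<exists>i<n. b \<le> X i"
proof (rule ccontr)
  assume "\<not> (\<exists>i<n. b \<le> X i)"
  then have "(\<Sum>i<n. X i) < (\<Sum>i<n. b)"
    using \<open>0 < n\<close> by (intro sum_strict_mono) auto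
  then show False using assms(2) by simp
qed

lemma rtrancl_leaves_set:
  assumes "(s, v) \<in> R\<^sup>*" "s \<in> C" "v \<notin> C"
  obtains u w where "(u, w) \<in> R" "u \<in> C" "w \<notin> C"
  using assms by (induction rule: rtrancl_induct) auto

lemma signed_le_abs:
  fixes \<sigma> v :: real
  assumes "\<bar>\<sigma>\<bar> = 1"
  shows "\<sigma> * v \<le> \<bar>v\<bar>"
proof -
  have "\<sigma> * v \<le> \<bar>\<sigma> * v\<bar>" by (rule abs_ge_self)
  then show ?thesis using assms by (simp add: abs_mult)
qed

lemma abs_le_if_signed_le:
  fixes v B :: real
  assumes "\<And>\<sigma>::real. \<bar>\<sigma>\<bar> = 1 \<Longrightarrow> \<sigma> * v \<le> B"
  shows "\<bar>v\<bar> \<le> B"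
  using assms[of 1] assms[of "-1"] by (cases "0 \<le> v") auto

lemma last_crossing:
  fixes u :: "real \<Rightarrow> real"
  assumes cont: "continuous_on {p..q} u" and "p \<le> q" and "u p \<le> c" and "c < u q"
  obtains s where "s \<in> {p..q}" "u s = c" "\<And>r. r \<in> {s..q} \<Longrightarrow> c \<le> u r"
proof -
  define Z where "Z = {r \<in> {p..q}. u r = c}"
  have "Z \<noteq> {}" using IVT'[of u p c q] assms unfolding Z_def by auto
  moreover have bdd: "bdd_above Z" unfolding Z_def by (rule bdd_aboveI[of _ q]) auto
  moreover have "closed Z"
    unfolding Z_def by (rule continuous_closed_preimage_constant[OF cont]) auto
  ultimately have sZ: "Sup Z \<in> Z" by (rule closed_contains_Sup)
  have "c \<le> u r" if r: "r \<in> {Sup Z..q}" for r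
  proof (rule ccontr)
    assume "\<not> c \<le> u r"
    moreover have "continuous_on {r..q} u"
      using cont sZ r unfolding Z_def by (auto intro: continuous_on_subset)
    ultimately obtain z where z: "z \<in> {r..q}" "u z = c" using IVT'[of u r c q] \<open>c < u q\<close> r by auto
    then have "z \<in> Z" using sZ r unfolding Z_def by auto
    then have "z \<le> Sup Z" using bdd by (rule cSup_upper)
    then have "z = r" using z r by auto
    then show False using z \<open>\<not> c \<le> u r\<close> by simp
  qed
  then show thesis using that sZ unfolding Z_def by auto
qed

lemma increment_above_level_le:
  fixes u g d \<psi> :: "real \<Rightarrow> real"
  assumes "s \<in> {p..q}"
    and u: "\<And>r. r \<in> {p..q} \<Longrightarrow> u r = u p + integral {p..r} g"
    and g: "g integrable_on {p..q}"
    and d: "d integrable_on {p..q}" "\<And>r. r \<in> {p..q} \<Longrightarrow> 0 \<le> d r" "integral {p..q} d \<le> 1/4"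
    and \<psi>: "\<psi> integrable_on {p..q}"
    and "c \<le> m"
    and above: "\<And>r. r \<in> {s..q} \<Longrightarrow> c \<le> u r"
    and damped: "\<And>r. r \<in> {p..q} \<Longrightarrow> c \<le> u r \<Longrightarrow> g r \<le> d r * (m - u r) - \<psi> r"
  shows "u q - u s \<le> (m - c)/4 - integral {s..q} \<psi>"
proof -
  have sub: "{s..q} \<subseteq> {p..q}" using \<open>s \<in> {p..q}\<close> by auto
  have int: "g integrable_on {s..q}" "d integrable_on {s..q}" "\<psi> integrable_on {s..q}"
    using sub g d(1) \<psi> integrable_on_subinterval by blast+
  have "integral {p..s} g + integral {s..q} g = integral {p..q} g"
    using \<open>s \<in> {p..q}\<close> by (intro Henstock_Kurzweil_Integration.integral_combine[OF _ _ g]) auto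
  then have "u q - u s = integral {s..q} g"
    using u[of q] u[of s] \<open>s \<in> {p..q}\<close> by auto
  also have "\<dots> \<le> integral {s..q} (\<lambda>r. (m - c) * d r - \<psi> r)"
  proof (rule integral_le)
    show "(\<lambda>r. (m - c) * d r - \<psi> r) integrable_on {s..q}"
      using int by (intro integrable_diff integrable_on_mult_right) auto
    fix r assume r: "r \<in> {s..q}"
    then have "d r * (m - u r) \<le> d r * (m - c)"
      using above d(2) sub by (intro mult_left_mono) auto
    moreover have "g r \<le> d r * (m - u r) - \<psi> r"
      using damped above r sub by blast
    ultimately show "g r \<le> (m - c) * d r - \<psi> r"
      by (simp add: mult.commute)
  qed (use int in auto)
  also have "\<dots> = (m - c) * integral {s..q} d - integral {s..q} \<psi>"
    using int by (simp add: integral_diff integrable_on_mult_right)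
  also have "\<dots> \<le> (m - c) * (1/4) - integral {s..q} \<psi>"
  proof -
    have "integral {p..s} d + integral {s..q} d = integral {p..q} d"
      using \<open>s \<in> {p..q}\<close> by (intro Henstock_Kurzweil_Integration.integral_combine[OF _ _ d(1)]) auto
    moreover have "0 \<le> integral {p..s} d"
      using \<open>s \<in> {p..q}\<close> d(2) by (intro integral_nonneg integrable_on_subinterval[OF d(1)]) auto
    ultimately show ?thesis
      using d(3) \<open>c \<le> m\<close> mult_left_mono[of "integral {s..q} d" "1/4" "m - c"] by linarith
  qed
  finally show ?thesis by simp
qed

text \<open>Either u stays above c on all of [p, q], and then the extra damping \<psi> is felt in
  full, or u crosses c for the last time at some s, after which the damping by the distance
  to m keeps its rise below (m - c)/4.\<close>

lemma barrier_bound: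
  fixes u g d \<psi> :: "real \<Rightarrow> real"
  assumes "p \<le> q"
    and u: "\<And>r. r \<in> {p..q} \<Longrightarrow> u r = u p + integral {p..r} g"
    and g: "g integrable_on {p..q}"
    and d: "d integrable_on {p..q}" "\<And>r. r \<in> {p..q} \<Longrightarrow> 0 \<le> d r" "integral {p..q} d \<le> 1/4"
    and \<psi>: "\<psi> integrable_on {p..q}" "\<And>r. r \<in> {p..q} \<Longrightarrow> 0 \<le> \<psi> r"
    and "c \<le> m" and ceiling: "\<And>r. r \<in> {p..q} \<Longrightarrow> u r \<le> m"
    and damped: "\<And>r. r \<in> {p..q} \<Longrightarrow> c \<le> u r \<Longrightarrow> g r \<le> d r * (m - u r) - \<psi> r"
  shows "u q \<le> max (c + (m - c)/4) (m + (m - c)/4 - integral {p..q} \<psi>)"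
    and "u p \<le> c \<Longrightarrow> u q \<le> c + (m - c)/4"
proof -
  note increment = increment_above_level_le[OF _ u g d \<psi>(1) \<open>c \<le> m\<close> _ damped]
  have cont: "continuous_on {p..q} u"
  proof (rule continuous_on_eq)
    show "continuous_on {p..q} (\<lambda>r. u p + integral {p..r} g)"
      by (intro continuous_on_add continuous_on_const indefinite_integral_continuous_1 g)
    show "u p + integral {p..r} g = u r" if "r \<in> {p..q}" for r
      using u[OF that] by simp
  qed
  have from_below: "u q \<le> c + (m - c)/4" if r: "r \<in> {p..q}" "u r \<le> c" for r
  proof (cases "u q \<le> c")
    case True
    moreover have "0 \<le> (m - c)/4" using \<open>c \<le> m\<close> by simp
    ultimately show ?thesis by linarith
  next
    case False
    moreover have "continuous_on {r..q} u" using cont r by (auto intro: continuous_on_subset)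
    ultimately obtain s where s: "s \<in> {r..q}" "u s = c" "\<And>r'. r' \<in> {s..q} \<Longrightarrow> c \<le> u r'"
      using last_crossing[of r q u c] r by auto
    then have "s \<in> {p..q}" using r by auto
    moreover have "0 \<le> integral {s..q} \<psi>"
      using \<psi> \<open>s \<in> {p..q}\<close> by (intro integral_nonneg integrable_on_subinterval[OF \<psi>(1)]) auto
    ultimately show ?thesis using increment[of s] s by simp
  qed
  show "u q \<le> max (c + (m - c)/4) (m + (m - c)/4 - integral {p..q} \<psi>)"
  proof (cases "\<exists>r\<in>{p..q}. u r \<le> c")
    case True
    then obtain r where "r \<in> {p..q}" "u r \<le> c" by blast
    then have "u q \<le> c + (m - c)/4" by (rule from_below)
    then show ?thesis by simp
  next
    case False
    then have "\<And>r. r \<in> {p..q} \<Longrightarrow> c \<le> u r" by (meson linorder_le_cases)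
    with \<open>p \<le> q\<close> have "u q - u p \<le> (m - c)/4 - integral {p..q} \<psi>"
      by (intro increment) auto
    moreover have "u p \<le> m" using ceiling \<open>p \<le> q\<close> by simp
    ultimately have "u q \<le> m + (m - c)/4 - integral {p..q} \<psi>" by linarith
    then show ?thesis by simp
  qed
  show "u p \<le> c \<Longrightarrow> u q \<le> c + (m - c)/4" using from_below[of p] \<open>p \<le> q\<close> by simp
qed

lemma mat_vec_signed_lap:
  assumes "a i i t = 0"
  shows "mat_vec (signed_lap a t) v i = (\<Sum>j\<in>UNIV. \<bar>a i j t\<bar>) * v i - (\<Sum>j\<in>UNIV. a i j t * v j)"
proof -
  have diag: "(\<Sum>j\<in>{j. a i j t \<noteq> 0}. \<bar>a i j t\<bar>) = (\<Sum>j\<in>UNIV. \<bar>a i j t\<bar>)"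
    by (rule sum.mono_neutral_left) auto
  have "mat_vec (signed_lap a t) v i
      = (\<Sum>j\<in>UNIV. (if i = j then (\<Sum>j\<in>UNIV. \<bar>a i j t\<bar>) * v j else 0) - a i j t * v j)"
    unfolding mat_vec_def signed_lap_def diag by (rule sum.cong) (auto simp: assms)
  then show ?thesis by (simp add: sum_subtractf)
qed

locale pinned_network =
  fixes a :: "'n::finite \<Rightarrow> 'n \<Rightarrow> real \<Rightarrow> real"
    and k :: "'n \<Rightarrow> real \<Rightarrow> real"
    and x :: "real \<Rightarrow> 'n \<Rightarrow> real"
    and xd :: "'n \<Rightarrow> real"
    and S :: "'n set"
    and t0 \<delta> T M0 \<kappa> :: real
  assumes no_self_loops: "\<And>i t. a i i t = 0"
    and M0: "0 \<le> M0"
    and coeff_integrable: "\<And>i j t1 t2. t1 \<le> t2 \<Longrightarrow>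
               (\<lambda>s. a i j s) absolutely_integrable_on {t1..t2} \<and>
               integral {t1..t2} (\<lambda>s. \<bar>a i j s\<bar>) \<le> M0 * (t2 - t1)"
    and T: "0 < T" and \<delta>: "0 < \<delta>" and t0: "0 \<le> t0"
    and root: "\<And>t. 0 \<le> t \<Longrightarrow> root_set (G_delta a \<delta> t (t + T)) S"
    and \<kappa>: "0 < \<kappa>"
    and gain_pinned: "\<And>i t. i \<in> S \<Longrightarrow> t0 \<le> t \<Longrightarrow> \<kappa> \<le> k i t"
    and gain_free: "\<And>j t. j \<notin> S \<Longrightarrow> t0 \<le> t \<Longrightarrow> k j t = 0"
    and sol: "carath_solution t0
               (\<lambda>t v i. - mat_vec (signed_lap a t) v i
                        + (mat_vec (signed_lap a t) xd i - k i t * (v i - xd i))) x"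
begin

definition err :: "real \<Rightarrow> 'n \<Rightarrow> real" where
  "err t j = x t j - xd j"

definition deg :: "'n \<Rightarrow> real \<Rightarrow> real" where
  "deg j t = (\<Sum>l\<in>UNIV. \<bar>a j l t\<bar>)"

definition rate :: "'n \<Rightarrow> real \<Rightarrow> real" where
  "rate j t = - mat_vec (signed_lap a t) (x t) j
              + (mat_vec (signed_lap a t) xd j - k j t * (x t j - xd j))"

definition damping :: "real \<Rightarrow> real \<Rightarrow> 'n \<Rightarrow> real \<Rightarrow> real" where
  "damping \<sigma> m j t = k j t * (\<sigma> * err t j) + (\<Sum>l\<in>UNIV. \<bar>a j l t\<bar> * (m - \<bar>err t l\<bar>))"

lemma gain_nonneg: "t0 \<le> t \<Longrightarrow> 0 \<le> k j t"
  using gain_pinned[of j t] gain_free[of j t] \<kappa> by (cases "j \<in> S") auto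

lemma S_nonempty: "S \<noteq> {}"
  using root[of 0] unfolding root_set_def by blast

lemma rate_eq: "rate j t = - (deg j t + k j t) * err t j + (\<Sum>l\<in>UNIV. a j l t * err t l)"
proof -
  have "(\<Sum>l\<in>UNIV. a j l t * err t l) = (\<Sum>l\<in>UNIV. a j l t * x t l) - (\<Sum>l\<in>UNIV. a j l t * xd l)"
    unfolding err_def by (simp add: right_diff_distrib sum_subtractf)
  then show ?thesis
    unfolding rate_def mat_vec_signed_lap[where a = a, OF no_self_loops] err_def deg_def
    by (simp add: algebra_simps)
qed

text \<open>Valid for every level m; the sign \<sigma> selects which of the bounds m and -m is
  being approached.\<close>

lemma signed_rate_le:
  assumes "\<bar>\<sigma>\<bar> = 1"
  shows "\<sigma> * rate j r \<le> deg j r * (m - \<sigma> * err r j) - damping \<sigma> m j r"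
proof -
  have "\<sigma> * (\<Sum>l\<in>UNIV. a j l r * err r l) = (\<Sum>l\<in>UNIV. \<sigma> * (a j l r * err r l))"
    by (simp add: sum_distrib_left)
  also have "\<dots> \<le> (\<Sum>l\<in>UNIV. \<bar>a j l r\<bar> * \<bar>err r l\<bar>)"
  proof (rule sum_mono)
    fix l
    show "\<sigma> * (a j l r * err r l) \<le> \<bar>a j l r\<bar> * \<bar>err r l\<bar>"
      using signed_le_abs[OF assms, of "a j l r * err r l"] by (simp add: abs_mult)
  qed
  finally have "\<sigma> * (\<Sum>l\<in>UNIV. a j l r * err r l) \<le> (\<Sum>l\<in>UNIV. \<bar>a j l r\<bar> * \<bar>err r l\<bar>)" .
  moreover have "(\<Sum>l\<in>UNIV. \<bar>a j l r\<bar> * (m - \<bar>err r l\<bar>)) = deg j r * m - (\<Sum>l\<in>UNIV. \<bar>a j l r\<bar> * \<bar>err r l\<bar>)"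
    unfolding deg_def by (simp add: right_diff_distrib sum_subtractf sum_distrib_right)
  ultimately show ?thesis
    unfolding rate_eq damping_def by (simp add: algebra_simps)
qed

lemma solution_integral:
  assumes "t0 \<le> t"
  shows "rate j absolutely_integrable_on {t0..t} \<and> x t j = x t0 j + integral {t0..t} (rate j)"
  using sol assms unfolding carath_solution_def rate_def[abs_def] by blast

lemma rate_integrable:
  assumes "t0 \<le> p" "p \<le> q"
  shows "rate j integrable_on {p..q}"
proof -
  have "rate j absolutely_integrable_on {t0..q}" using solution_integral[of q j] assms by simp
  then have "rate j integrable_on {t0..q}" by (rule set_lebesgue_integral_eq_integral(1))
  then show ?thesis by (rule integrable_on_subinterval) (use assms in auto)
qed

lemma err_eq_integral:
  assumes "t0 \<le> p" "p \<le> q"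
  shows "err q j = err p j + integral {p..q} (rate j)"
proof -
  have "integral {t0..p} (rate j) + integral {p..q} (rate j) = integral {t0..q} (rate j)"
    using assms by (intro Henstock_Kurzweil_Integration.integral_combine rate_integrable) auto
  then show ?thesis
    using solution_integral[of p j] solution_integral[of q j] assms unfolding err_def by auto
qed

lemma continuous_on_err:
  assumes "t0 \<le> p" "p \<le> q"
  shows "continuous_on {p..q} (\<lambda>r. err r j)"
proof (rule continuous_on_eq)
  show "continuous_on {p..q} (\<lambda>r. err p j + integral {p..r} (rate j))"
    using assms
    by (intro continuous_on_add continuous_on_const indefinite_integral_continuous_1 rate_integrable)
  show "err p j + integral {p..r} (rate j) = err r j" if "r \<in> {p..q}" for r
    using err_eq_integral[of p r j] assms that by simp
qed

lemma abs_coeff_integrable: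
  assumes "p \<le> q"
  shows "(\<lambda>s. \<bar>a i j s\<bar>) integrable_on {p..q}"
proof -
  have "(\<lambda>s. a i j s) absolutely_integrable_on {p..q}" using coeff_integrable[OF assms] by blast
  then have "(\<lambda>s. norm (a i j s)) integrable_on {p..q}" using absolutely_integrable_on_def by blast
  then show ?thesis by simp
qed

lemma deg_integrable: "p \<le> q \<Longrightarrow> deg j integrable_on {p..q}"
  unfolding deg_def by (intro integrable_sum abs_coeff_integrable) auto

lemma deg_nonneg: "0 \<le> deg j t"
  unfolding deg_def by (auto intro: sum_nonneg)

definition deg_bound :: real where
  "deg_bound = real CARD('n) * M0"

lemma integral_deg_le:
  assumes "p \<le> q"
  shows "integral {p..q} (deg j) \<le> deg_bound * (q - p)"
proof -
  have "integral {p..q} (deg j) = (\<Sum>l\<in>UNIV. integral {p..q} (\<lambda>s. \<bar>a j l s\<bar>))"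
    unfolding deg_def using assms by (intro integral_sum abs_coeff_integrable) auto
  also have "\<dots> \<le> (\<Sum>l\<in>(UNIV::'n set). M0 * (q - p))"
    using coeff_integrable assms by (intro sum_mono) auto
  finally show ?thesis unfolding deg_bound_def by simp
qed

text \<open>The windows of length T are cut into nsteps steps of length \<tau>, short enough for the
  degree integral over a step to be at most 1/4, as barrier_bound requires.\<close>

definition nsteps :: nat where
  "nsteps = nat \<lceil>4 * deg_bound * T\<rceil> + 1"

definition \<tau> :: real where
  "\<tau> = T / real nsteps"

lemma nsteps_pos: "0 < nsteps"
  unfolding nsteps_def by simp

lemma \<tau>_pos: "0 < \<tau>"
  unfolding \<tau>_def using T nsteps_pos by simp

lemma nsteps_mult_\<tau>: "real nsteps * \<tau> = T"
  unfolding \<tau>_def using nsteps_pos by simp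

lemma \<tau>_le_T: "\<tau> \<le> T"
  using nsteps_mult_\<tau> nsteps_pos \<tau>_pos mult_right_mono[of 1 "real nsteps" \<tau>] by simp

lemma integral_deg_le_quarter:
  assumes "p \<le> q" "q \<le> p + \<tau>"
  shows "integral {p..q} (deg j) \<le> 1/4"
proof -
  have "4 * deg_bound * T \<le> real nsteps"
    unfolding nsteps_def by linarith
  then have "deg_bound * \<tau> \<le> 1/4"
    unfolding \<tau>_def using nsteps_pos by (simp add: field_simps)
  moreover have "deg_bound * (q - p) \<le> deg_bound * \<tau>"
    using assms M0 unfolding deg_bound_def by (intro mult_left_mono) auto
  ultimately show ?thesis using integral_deg_le[OF assms(1), of j] by linarith
qed

lemma signed_err_barrier:
  fixes \<psi> :: "real \<Rightarrow> real"
  assumes "t0 \<le> p" "p \<le> q" "q \<le> p + \<tau>" and \<sigma>: "\<bar>\<sigma>\<bar> = 1"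
    and bound: "\<And>r l. r \<in> {p..q} \<Longrightarrow> \<bar>err r l\<bar> \<le> m" and "c \<le> m"
    and \<psi>: "\<psi> integrable_on {p..q}" "\<And>r. r \<in> {p..q} \<Longrightarrow> 0 \<le> \<psi> r"
    and damped: "\<And>r. r \<in> {p..q} \<Longrightarrow> c \<le> \<sigma> * err r j \<Longrightarrow> \<psi> r \<le> damping \<sigma> m j r"
  shows "\<sigma> * err q j \<le> max (c + (m - c)/4) (m + (m - c)/4 - integral {p..q} \<psi>)"
    and "\<sigma> * err p j \<le> c \<Longrightarrow> \<sigma> * err q j \<le> c + (m - c)/4"
proof -
  have u: "\<sigma> * err r j = \<sigma> * err p j + integral {p..r} (\<lambda>r. \<sigma> * rate j r)" if "r \<in> {p..q}" for r
    using err_eq_integral[of p r j] assms(1) that by (simp add: distrib_left)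
  have g: "(\<lambda>r. \<sigma> * rate j r) integrable_on {p..q}"
    using rate_integrable[OF assms(1,2)] by (rule integrable_on_mult_right)
  have ceiling: "\<sigma> * err r j \<le> m" if "r \<in> {p..q}" for r
    using bound[OF that, of j] signed_le_abs[OF \<sigma>, of "err r j"] by linarith
  have damped': "\<sigma> * rate j r \<le> deg j r * (m - \<sigma> * err r j) - \<psi> r"
    if "r \<in> {p..q}" "c \<le> \<sigma> * err r j" for r
    using signed_rate_le[OF \<sigma>, of j r m] damped[OF that] by linarith
  note barrier = barrier_bound[OF assms(2) u g deg_integrable[OF assms(2)] deg_nonneg
      integral_deg_le_quarter[OF assms(2,3)] \<psi> \<open>c \<le> m\<close> ceiling damped']
  show "\<sigma> * err q j \<le> max (c + (m - c)/4) (m + (m - c)/4 - integral {p..q} \<psi>)"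
    using barrier(1) .
  show "\<sigma> * err p j \<le> c \<Longrightarrow> \<sigma> * err q j \<le> c + (m - c)/4"
    using barrier(2) .
qed

lemma damping_nonneg:
  assumes "t0 \<le> r" "0 \<le> \<sigma> * err r j" "\<And>l. \<bar>err r l\<bar> \<le> m"
  shows "0 \<le> damping \<sigma> m j r"
  unfolding damping_def using gain_nonneg[OF assms(1)] assms(2,3)
  by (intro add_nonneg_nonneg sum_nonneg) auto

lemma err_attains_max:
  assumes "t0 \<le> p" "p \<le> q"
  obtains r j where "r \<in> {p..q}" "\<And>y l. y \<in> {p..q} \<Longrightarrow> \<bar>err y l\<bar> \<le> \<bar>err r j\<bar>"
proof -
  have "\<exists>r\<in>{p..q}. \<forall>y\<in>{p..q}. \<bar>err y l\<bar> \<le> \<bar>err r l\<bar>" for l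
    using assms continuous_on_err[OF assms, of l]
    by (intro continuous_attains_sup continuous_on_rabs) auto
  then obtain R where R: "\<And>l. R l \<in> {p..q}" "\<And>l y. y \<in> {p..q} \<Longrightarrow> \<bar>err y l\<bar> \<le> \<bar>err (R l) l\<bar>"
    by metis
  define f where "f l = \<bar>err (R l) l\<bar>" for l
  have "Max (range f) \<in> range f" by (rule Max_in) auto
  then obtain j where "Max (range f) = f j" by blast
  then have "f l \<le> f j" for l using Max_ge[of "range f" "f l"] by simp
  then show thesis using that[OF R(1)[of j]] R(2) unfolding f_def by (meson order_trans)
qed

lemma err_bound_step:
  assumes s: "t0 \<le> s" and bound: "\<And>l. \<bar>err s l\<bar> \<le> m" and r: "r \<in> {s..s + \<tau>}"
  shows "\<bar>err r l\<bar> \<le> m"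
proof -
  have "s \<le> s + \<tau>" using \<tau>_pos by simp
  then obtain r' j where r': "r' \<in> {s..s + \<tau>}"
    and max: "\<And>y l. y \<in> {s..s + \<tau>} \<Longrightarrow> \<bar>err y l\<bar> \<le> \<bar>err r' j\<bar>"
    using err_attains_max[OF s] by blast
  have "0 \<le> m" using bound[of j] by linarith
  have "\<bar>err r' j\<bar> \<le> m"
  proof (rule ccontr)
    assume "\<not> \<bar>err r' j\<bar> \<le> m"
    then have "m \<le> \<bar>err r' j\<bar>" by simp
    have "\<bar>err r' j\<bar> \<le> m + (\<bar>err r' j\<bar> - m)/4"
    proof (rule abs_le_if_signed_le)
      fix \<sigma> :: real assume \<sigma>: "\<bar>\<sigma>\<bar> = 1"
      show "\<sigma> * err r' j \<le> m + (\<bar>err r' j\<bar> - m)/4"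
      proof (rule signed_err_barrier(2)[OF s _ _ \<sigma>, of r' "\<bar>err r' j\<bar>" m "\<lambda>_. 0"])
        show "\<And>y l. y \<in> {s..r'} \<Longrightarrow> \<bar>err y l\<bar> \<le> \<bar>err r' j\<bar>" using max r' by auto
        show "\<sigma> * err s j \<le> m" using signed_le_abs[OF \<sigma>] bound order_trans by blast
        show "\<And>y. y \<in> {s..r'} \<Longrightarrow> m \<le> \<sigma> * err y j \<Longrightarrow> 0 \<le> damping \<sigma> \<bar>err r' j\<bar> j y"
          using s r' max \<open>0 \<le> m\<close> by (intro damping_nonneg) auto
      qed (use r' \<open>m \<le> \<bar>err r' j\<bar>\<close> in auto)
    qed
    then have "4 * \<bar>err r' j\<bar> \<le> 4 * m + (\<bar>err r' j\<bar> - m)" by (simp add: field_simps)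
    then show False using \<open>\<not> \<bar>err r' j\<bar> \<le> m\<close> by linarith
  qed
  then show ?thesis using max[OF r, of l] by linarith
qed

lemma err_bound_persists:
  assumes "t0 \<le> s" "\<And>l. \<bar>err s l\<bar> \<le> m" "s \<le> t"
  shows "\<bar>err t l\<bar> \<le> m"
proof -
  have "\<bar>err r l\<bar> \<le> m" if "s \<le> r" "r \<le> s + real n * \<tau>" for n r l
    using that
  proof (induction n arbitrary: r l)
    case 0
    then show ?case using assms(2) by simp
  next
    case (Suc n)
    have "0 \<le> real n * \<tau>" using \<tau>_pos by simp
    show ?case
    proof (cases "r \<le> s + real n * \<tau>")
      case True
      then show ?thesis using Suc by blast
    next
      case False
      have "r \<in> {s + real n * \<tau>..s + real n * \<tau> + \<tau>}"
        using False Suc.prems by (auto simp: distrib_right)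
      then show ?thesis
        using err_bound_step[of "s + real n * \<tau>" m r] Suc.IH assms(1) \<open>0 \<le> real n * \<tau>\<close> by simp
    qed
  qed
  moreover obtain n :: nat where "(t - s) / \<tau> \<le> real n" using real_arch_simple by blast
  then have "t \<le> s + real n * \<tau>" using \<tau>_pos by (simp add: field_simps)
  ultimately show ?thesis using assms(3) by blast
qed

definition bounded_from :: "real \<Rightarrow> real \<Rightarrow> bool" where
  "bounded_from t1 m \<longleftrightarrow> t0 \<le> t1 \<and> (\<forall>r\<ge>t1. \<forall>l. \<bar>err r l\<bar> \<le> m)"

lemma bounded_fromI: "t0 \<le> t1 \<Longrightarrow> (\<And>l. \<bar>err t1 l\<bar> \<le> m) \<Longrightarrow> bounded_from t1 m"
  unfolding bounded_from_def using err_bound_persists by blast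

lemma bounded_fromD:
  assumes "bounded_from t1 m"
  shows "t0 \<le> t1" "0 \<le> m" "t1 \<le> r \<Longrightarrow> \<bar>err r l\<bar> \<le> m"
  using assms unfolding bounded_from_def by (auto intro: order_trans[OF abs_ge_zero])

lemma err_level_step:
  assumes B: "bounded_from t1 m" and "t1 \<le> s" and lev: "\<bar>err s j\<bar> \<le> (1 - \<epsilon>) * m"
    and \<epsilon>: "0 \<le> \<epsilon>" "\<epsilon> \<le> 1" and r: "r \<in> {s..s + \<tau>}"
  shows "\<bar>err r j\<bar> \<le> (1 - 3/4 * \<epsilon>) * m"
proof (rule abs_le_if_signed_le)
  fix \<sigma> :: real assume \<sigma>: "\<bar>\<sigma>\<bar> = 1"
  have s: "t0 \<le> s" using bounded_fromD(1)[OF B] \<open>t1 \<le> s\<close> by linarith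
  have "0 \<le> m" by (rule bounded_fromD(2)[OF B])
  have "\<sigma> * err r j \<le> (1 - \<epsilon>) * m + (m - (1 - \<epsilon>) * m)/4"
  proof (rule signed_err_barrier(2)[OF s _ _ \<sigma>, of r m "(1 - \<epsilon>) * m" "\<lambda>_. 0"])
    show "\<And>y l. y \<in> {s..r} \<Longrightarrow> \<bar>err y l\<bar> \<le> m" using bounded_fromD(3)[OF B] \<open>t1 \<le> s\<close> by auto
    show "(1 - \<epsilon>) * m \<le> m" using \<open>0 \<le> m\<close> \<epsilon> by (simp add: mult_left_le_one_le)
    show "\<sigma> * err s j \<le> (1 - \<epsilon>) * m" using signed_le_abs[OF \<sigma>] lev order_trans by blast
    fix y assume y: "y \<in> {s..r}" "(1 - \<epsilon>) * m \<le> \<sigma> * err y j"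
    have "0 \<le> (1 - \<epsilon>) * m" using \<epsilon> \<open>0 \<le> m\<close> by simp
    show "0 \<le> damping \<sigma> m j y"
    proof (rule damping_nonneg)
      show "t0 \<le> y" "0 \<le> \<sigma> * err y j" using s y \<open>0 \<le> (1 - \<epsilon>) * m\<close> by auto
      show "\<And>l. \<bar>err y l\<bar> \<le> m" using bounded_fromD(3)[OF B] \<open>t1 \<le> s\<close> y by auto
    qed
  qed (use r in auto)
  then show "\<sigma> * err r j \<le> (1 - 3/4 * \<epsilon>) * m" by (simp add: algebra_simps)
qed

lemma err_level_steps:
  assumes B: "bounded_from t1 m" and "t1 \<le> s" and lev: "\<bar>err s j\<bar> \<le> (1 - \<epsilon>) * m"
    and \<epsilon>: "0 \<le> \<epsilon>" "\<epsilon> \<le> 1" and r: "r \<in> {s..s + real n * \<tau>}"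
  shows "\<bar>err r j\<bar> \<le> (1 - (3/4)^n * \<epsilon>) * m"
  using r
proof (induction n arbitrary: r)
  case 0
  then show ?case using lev by simp
next
  case (Suc n)
  have "0 \<le> m" by (rule bounded_fromD(2)[OF B])
  have "0 \<le> real n * \<tau>" using \<tau>_pos by simp
  have "(3/4)^n * \<epsilon> \<le> 1" using \<epsilon> by (simp add: mult_le_one power_le_one)
  show ?case
  proof (cases "r \<le> s + real n * \<tau>")
    case True
    then have "\<bar>err r j\<bar> \<le> (1 - (3/4)^n * \<epsilon>) * m" using Suc by auto
    also have "\<dots> \<le> (1 - (3/4)^(Suc n) * \<epsilon>) * m"
      using \<epsilon> \<open>0 \<le> m\<close> by (intro mult_right_mono) (auto intro: mult_right_mono)
    finally show ?thesis .
  next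
    case False
    have "\<bar>err (s + real n * \<tau>) j\<bar> \<le> (1 - (3/4)^n * \<epsilon>) * m"
      using Suc.IH \<open>0 \<le> real n * \<tau>\<close> by simp
    moreover have "t1 \<le> s + real n * \<tau>" using \<open>t1 \<le> s\<close> \<open>0 \<le> real n * \<tau>\<close> by linarith
    ultimately have "\<bar>err r j\<bar> \<le> (1 - 3/4 * ((3/4)^n * \<epsilon>)) * m"
      using B \<epsilon> \<open>(3/4)^n * \<epsilon> \<le> 1\<close> False Suc.prems
      by (intro err_level_step[of t1 m "s + real n * \<tau>"]) (auto simp: distrib_right)
    then show ?thesis by (simp add: ac_simps)
  qed
qed

definition \<rho> :: real where
  "\<rho> = (3/4) ^ nsteps"

lemma \<rho>_pos: "0 < \<rho>" and \<rho>_le_1: "\<rho> \<le> 1"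
  unfolding \<rho>_def by (auto intro: power_le_one)

lemma err_level_persists:
  assumes "bounded_from t1 m" "t1 \<le> s" "\<bar>err s j\<bar> \<le> (1 - \<epsilon>) * m" "0 \<le> \<epsilon>" "\<epsilon> \<le> 1"
    and "r \<in> {s..s + T}"
  shows "\<bar>err r j\<bar> \<le> (1 - \<rho> * \<epsilon>) * m"
  using err_level_steps[OF assms(1-5), of r nsteps] assms(6) nsteps_mult_\<tau> unfolding \<rho>_def by simp

lemma err_contracts_if_damped:
  fixes \<psi> :: "real \<Rightarrow> real"
  assumes B: "bounded_from t1 m" and p: "t1 \<le> p" and \<beta>: "0 \<le> \<beta>" "\<beta> \<le> 1"
    and \<psi>: "\<psi> integrable_on {p..p + \<tau>}" "\<And>r. r \<in> {p..p + \<tau>} \<Longrightarrow> 0 \<le> \<psi> r"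
      "\<beta> * m \<le> integral {p..p + \<tau>} \<psi>"
    and damped: "\<And>\<sigma> r. \<bar>\<sigma>\<bar> = 1 \<Longrightarrow> r \<in> {p..p + \<tau>} \<Longrightarrow> (1 - \<beta>) * m \<le> \<sigma> * err r j \<Longrightarrow>
              \<psi> r \<le> damping \<sigma> m j r"
  shows "\<bar>err (p + \<tau>) j\<bar> \<le> (1 - 3/4 * \<beta>) * m"
proof (rule abs_le_if_signed_le)
  fix \<sigma> :: real assume \<sigma>: "\<bar>\<sigma>\<bar> = 1"
  define c where "c = (1 - \<beta>) * m"
  have "t0 \<le> p" using bounded_fromD(1)[OF B] p by linarith
  have "0 \<le> m" by (rule bounded_fromD(2)[OF B])
  have "\<sigma> * err (p + \<tau>) j \<le> max (c + (m - c)/4) (m + (m - c)/4 - integral {p..p + \<tau>} \<psi>)"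
  proof (rule signed_err_barrier(1)[OF \<open>t0 \<le> p\<close> _ _ \<sigma> _ _ \<psi>(1,2)])
    show "\<And>r l. r \<in> {p..p + \<tau>} \<Longrightarrow> \<bar>err r l\<bar> \<le> m" using bounded_fromD(3)[OF B] p by auto
    show "c \<le> m" unfolding c_def using \<open>0 \<le> m\<close> \<beta> by (simp add: mult_left_le_one_le)
  qed (use \<tau>_pos damped[OF \<sigma>] in \<open>auto simp: c_def\<close>)
  moreover have "c + (m - c)/4 = (1 - 3/4 * \<beta>) * m"
    unfolding c_def by (simp add: algebra_simps)
  moreover have "m + (m - c)/4 - integral {p..p + \<tau>} \<psi> \<le> (1 - 3/4 * \<beta>) * m"
    using \<psi>(3) unfolding c_def by (simp add: algebra_simps)
  ultimately show "\<sigma> * err (p + \<tau>) j \<le> (1 - 3/4 * \<beta>) * m" by simp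
qed

text \<open>\<beta> = pin_gain solves \<kappa> \<tau> (1 - \<beta>) = \<beta>: a gain at least \<kappa> acting above the level
  (1 - \<beta>) m for one step supplies damping of mass \<beta> m.\<close>

definition pin_gain :: real where
  "pin_gain = \<kappa> * \<tau> / (1 + \<kappa> * \<tau>)"

lemma pin_gain_pos: "0 < pin_gain" and pin_gain_le_1: "pin_gain \<le> 1"
  and pin_gain_eq: "\<kappa> * \<tau> * (1 - pin_gain) = pin_gain"
proof -
  have "0 < \<kappa> * \<tau>" using \<kappa> \<tau>_pos by simp
  then show "0 < pin_gain" "pin_gain \<le> 1" "\<kappa> * \<tau> * (1 - pin_gain) = pin_gain"
    unfolding pin_gain_def by (simp_all add: field_simps)
qed

lemma pinned_err_contracts:
  assumes B: "bounded_from t1 m" and "t1 \<le> p" and "i \<in> S"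
  shows "\<bar>err (p + \<tau>) i\<bar> \<le> (1 - 3/4 * pin_gain) * m"
proof (rule err_contracts_if_damped[OF B \<open>t1 \<le> p\<close>, of _ "\<lambda>_. \<kappa> * ((1 - pin_gain) * m)"])
  have "t0 \<le> p" "0 \<le> m" using bounded_fromD(1,2)[OF B] \<open>t1 \<le> p\<close> by auto
  show "0 \<le> pin_gain" "pin_gain \<le> 1" using pin_gain_pos pin_gain_le_1 by auto
  show "(\<lambda>_. \<kappa> * ((1 - pin_gain) * m)) integrable_on {p..p + \<tau>}"
    by (rule integrable_const_ivl)
  show "\<And>r. 0 \<le> \<kappa> * ((1 - pin_gain) * m)" using \<kappa> pin_gain_le_1 \<open>0 \<le> m\<close> by simp
  show "pin_gain * m \<le> integral {p..p + \<tau>} (\<lambda>_. \<kappa> * ((1 - pin_gain) * m))"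
  proof -
    have "integral {p..p + \<tau>} (\<lambda>_. \<kappa> * ((1 - pin_gain) * m)) = (\<kappa> * \<tau> * (1 - pin_gain)) * m"
      using \<tau>_pos by simp
    also have "\<dots> = pin_gain * m" by (simp only: pin_gain_eq)
    finally show ?thesis by linarith
  qed
  fix \<sigma> r assume r: "r \<in> {p..p + \<tau>}" and above: "(1 - pin_gain) * m \<le> \<sigma> * err r i"
  have "t0 \<le> r" using r \<open>t0 \<le> p\<close> by auto
  have "0 \<le> (1 - pin_gain) * m" using pin_gain_le_1 \<open>0 \<le> m\<close> by simp
  have "\<kappa> * ((1 - pin_gain) * m) \<le> k i r * (\<sigma> * err r i)"
    using gain_pinned[OF \<open>i \<in> S\<close> \<open>t0 \<le> r\<close>] above \<kappa> \<open>0 \<le> (1 - pin_gain) * m\<close>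
    by (intro mult_mono[of \<kappa> "k i r" "(1 - pin_gain) * m" "\<sigma> * err r i"]) auto
  moreover have "0 \<le> (\<Sum>l\<in>UNIV. \<bar>a i l r\<bar> * (m - \<bar>err r l\<bar>))"
    using bounded_fromD(3)[OF B] r \<open>t1 \<le> p\<close> by (intro sum_nonneg) auto
  ultimately show "\<kappa> * ((1 - pin_gain) * m) \<le> damping \<sigma> m i r"
    unfolding damping_def by linarith
qed

lemma err_follows_arc:
  assumes B: "bounded_from t1 m" and "t1 \<le> p"
    and lev: "\<And>r. r \<in> {p..p + \<tau>} \<Longrightarrow> \<bar>err r l\<bar> \<le> (1 - \<eta>) * m" and \<eta>: "0 \<le> \<eta>" "\<eta> \<le> 1"
    and heavy: "\<delta> * \<tau> \<le> integral {p..p + \<tau>} (\<lambda>r. \<bar>a j l r\<bar>)"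
  shows "\<bar>err (p + \<tau>) j\<bar> \<le> (1 - 3/4 * (\<eta> * min 1 (\<delta> * \<tau>))) * m"
proof (rule err_contracts_if_damped[OF B \<open>t1 \<le> p\<close>, of _ "\<lambda>r. \<eta> * m * \<bar>a j l r\<bar>"])
  have "0 \<le> m" "t0 \<le> p" using bounded_fromD(1,2)[OF B] \<open>t1 \<le> p\<close> by auto
  have int: "(\<lambda>r. \<bar>a j l r\<bar>) integrable_on {p..p + \<tau>}"
    using \<tau>_pos by (intro abs_coeff_integrable) simp
  have min: "0 \<le> min 1 (\<delta> * \<tau>)" "min 1 (\<delta> * \<tau>) \<le> 1" "min 1 (\<delta> * \<tau>) \<le> \<delta> * \<tau>"
    using \<delta> \<tau>_pos by auto
  show "0 \<le> \<eta> * min 1 (\<delta> * \<tau>)" "\<eta> * min 1 (\<delta> * \<tau>) \<le> 1"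
    using \<eta> min by (auto intro: mult_le_one)
  show "(\<lambda>r. \<eta> * m * \<bar>a j l r\<bar>) integrable_on {p..p + \<tau>}"
    using int by (rule integrable_on_mult_right)
  show "\<And>r. 0 \<le> \<eta> * m * \<bar>a j l r\<bar>" using \<eta> \<open>0 \<le> m\<close> by simp
  have "\<eta> * min 1 (\<delta> * \<tau>) * m \<le> \<eta> * m * (\<delta> * \<tau>)"
    using \<eta> \<open>0 \<le> m\<close> min(3) mult_left_mono[of "min 1 (\<delta> * \<tau>)" "\<delta> * \<tau>" "\<eta> * m"]
    by (simp add: ac_simps)
  also have "\<dots> \<le> \<eta> * m * integral {p..p + \<tau>} (\<lambda>r. \<bar>a j l r\<bar>)"
    using heavy \<eta> \<open>0 \<le> m\<close> by (intro mult_left_mono) auto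
  finally show "\<eta> * min 1 (\<delta> * \<tau>) * m \<le> integral {p..p + \<tau>} (\<lambda>r. \<eta> * m * \<bar>a j l r\<bar>)"
    by simp
  fix \<sigma> r assume r: "r \<in> {p..p + \<tau>}"
    and above: "(1 - \<eta> * min 1 (\<delta> * \<tau>)) * m \<le> \<sigma> * err r j"
  have "t0 \<le> r" using r \<open>t0 \<le> p\<close> by auto
  have bound: "\<bar>err r l'\<bar> \<le> m" for l' using bounded_fromD(3)[OF B] r \<open>t1 \<le> p\<close> by auto
  have "0 \<le> (1 - \<eta> * min 1 (\<delta> * \<tau>)) * m"
    using \<eta> min \<open>0 \<le> m\<close> by (simp add: mult_le_one)
  then have "0 \<le> k j r * (\<sigma> * err r j)"
    using gain_nonneg[OF \<open>t0 \<le> r\<close>] above by simp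
  have "\<eta> * m \<le> m - \<bar>err r l\<bar>" using lev[OF r] by (simp add: algebra_simps)
  then have "\<eta> * m * \<bar>a j l r\<bar> \<le> \<bar>a j l r\<bar> * (m - \<bar>err r l\<bar>)"
    using mult_left_mono[of "\<eta> * m" "m - \<bar>err r l\<bar>" "\<bar>a j l r\<bar>"] by (simp add: ac_simps)
  also have "\<dots> \<le> (\<Sum>l'\<in>UNIV. \<bar>a j l' r\<bar> * (m - \<bar>err r l'\<bar>))"
    by (rule member_le_sum) (use bound in auto)
  finally show "\<eta> * m * \<bar>a j l r\<bar> \<le> damping \<sigma> m j r"
    unfolding damping_def using \<open>0 \<le> k j r * (\<sigma> * err r j)\<close> by linarith
qed

lemma arc_has_heavy_step:
  assumes "(l, j) \<in> G_delta a \<delta> w (w + T)"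
  obtains p where "w \<le> p" "p + \<tau> \<le> w + T" "\<delta> * \<tau> \<le> integral {p..p + \<tau>} (\<lambda>r. \<bar>a j l r\<bar>)"
proof -
  have "real nsteps * (\<delta> * \<tau>) \<le> integral {w..w + real nsteps * \<tau>} (\<lambda>r. \<bar>a j l r\<bar>)"
    using assms nsteps_mult_\<tau>
    unfolding G_delta_def delta_arc_def integral_atLeastLessThan_eq_Icc by (simp add: ac_simps)
  also have "\<dots> = (\<Sum>i<nsteps. integral {w + real i * \<tau>..w + real (Suc i) * \<tau>} (\<lambda>r. \<bar>a j l r\<bar>))"
    using \<tau>_pos by (intro integral_equal_pieces abs_coeff_integrable) auto
  finally obtain i where i: "i < nsteps"
    "\<delta> * \<tau> \<le> integral {w + real i * \<tau>..w + real (Suc i) * \<tau>} (\<lambda>r. \<bar>a j l r\<bar>)"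
    using ex_ge_of_sum_ge[OF nsteps_pos] by blast
  have "real (Suc i) * \<tau> \<le> real nsteps * \<tau>"
    using i(1) \<tau>_pos by (intro mult_right_mono) auto
  have step: "w + real (Suc i) * \<tau> = w + real i * \<tau> + \<tau>" by (simp add: distrib_right)
  show thesis
  proof (rule that[of "w + real i * \<tau>"])
    show "w \<le> w + real i * \<tau>" using \<tau>_pos by simp
    show "w + real i * \<tau> + \<tau> \<le> w + T"
      using \<open>real (Suc i) * \<tau> \<le> real nsteps * \<tau>\<close> step nsteps_mult_\<tau> by linarith
    show "\<delta> * \<tau> \<le> integral {w + real i * \<tau>..w + real i * \<tau> + \<tau>} (\<lambda>r. \<bar>a j l r\<bar>)"
      using i(2) unfolding step .
  qed
qed

text \<open>One factor \<rho> keeps the tail of the arc low until the heavy step, the factor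
  3/4 min 1 (\<delta> \<tau>) comes from that step, and a second \<rho> keeps the head low until the end
  of the window.\<close>

definition spread_gain :: real where
  "spread_gain = 3/4 * \<rho>^2 * min 1 (\<delta> * \<tau>)"

lemma spread_gain_pos: "0 < spread_gain" and spread_gain_le_\<rho>: "spread_gain \<le> \<rho>"
proof -
  have min: "0 < min 1 (\<delta> * \<tau>)" "min 1 (\<delta> * \<tau>) \<le> 1" using \<delta> \<tau>_pos by auto
  then show "0 < spread_gain" unfolding spread_gain_def using \<rho>_pos by simp
  have "(3/4 * min 1 (\<delta> * \<tau>)) * \<rho>^2 \<le> \<rho>^2"
    using min by (intro mult_left_le_one_le) auto
  also have "\<rho>^2 \<le> \<rho>"
    using \<rho>_pos \<rho>_le_1 unfolding power2_eq_square by (intro mult_left_le_one_le) auto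
  finally show "spread_gain \<le> \<rho>" unfolding spread_gain_def by (simp add: ac_simps)
qed

text \<open>As S is a root set of the window graph, a \<delta>-arc leaves every C containing S, and the
  error at its head follows the lowered level at its tail.\<close>

lemma err_level_spreads:
  assumes B: "bounded_from t1 m" and "t1 \<le> w" and "S \<subseteq> C" and "C \<noteq> UNIV"
    and lev: "\<And>l. l \<in> C \<Longrightarrow> \<bar>err w l\<bar> \<le> (1 - \<epsilon>) * m" and \<epsilon>: "0 \<le> \<epsilon>" "\<epsilon> \<le> 1"
  obtains j where "j \<notin> C" "\<bar>err (w + T) j\<bar> \<le> (1 - spread_gain * \<epsilon>) * m"
proof -
  have "0 \<le> w" using bounded_fromD(1)[OF B] \<open>t1 \<le> w\<close> t0 by linarith
  obtain j0 where "j0 \<notin> C" using \<open>C \<noteq> UNIV\<close> by blast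
  then have "j0 \<notin> S" using \<open>S \<subseteq> C\<close> by blast
  then obtain s where "s \<in> S" and path: "(s, j0) \<in> (G_delta a \<delta> w (w + T))\<^sup>*"
    using root[OF \<open>0 \<le> w\<close>] unfolding root_set_def by blast
  then have "s \<in> C" using \<open>S \<subseteq> C\<close> by blast
  obtain l j where arc: "(l, j) \<in> G_delta a \<delta> w (w + T)" and "l \<in> C" "j \<notin> C"
    by (rule rtrancl_leaves_set[OF path \<open>s \<in> C\<close> \<open>j0 \<notin> C\<close>])
  obtain p where p: "w \<le> p" "p + \<tau> \<le> w + T"
    and heavy: "\<delta> * \<tau> \<le> integral {p..p + \<tau>} (\<lambda>r. \<bar>a j l r\<bar>)"
    by (rule arc_has_heavy_step[OF arc])
  have "t1 \<le> p" using \<open>t1 \<le> w\<close> p(1) by linarith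
  have \<rho>\<epsilon>: "0 \<le> \<rho> * \<epsilon>" "\<rho> * \<epsilon> \<le> 1"
    using \<rho>_pos \<rho>_le_1 \<epsilon> mult_le_one[of \<rho> \<epsilon>] by auto
  define \<beta> where "\<beta> = 3/4 * (\<rho> * \<epsilon> * min 1 (\<delta> * \<tau>))"
  have \<beta>: "0 \<le> \<beta>" "\<beta> \<le> 1"
    unfolding \<beta>_def using \<rho>\<epsilon> \<delta> \<tau>_pos mult_le_one[of "\<rho> * \<epsilon>" "min 1 (\<delta> * \<tau>)"] by auto
  have "\<bar>err r l\<bar> \<le> (1 - \<rho> * \<epsilon>) * m" if "r \<in> {p..p + \<tau>}" for r
  proof (rule err_level_persists[OF B \<open>t1 \<le> w\<close> lev[OF \<open>l \<in> C\<close>] \<epsilon>])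
    show "r \<in> {w..w + T}" using that p by auto
  qed
  then have "\<bar>err (p + \<tau>) j\<bar> \<le> (1 - \<beta>) * m"
    unfolding \<beta>_def by (rule err_follows_arc[OF B \<open>t1 \<le> p\<close> _ \<rho>\<epsilon> heavy])
  moreover have "t1 \<le> p + \<tau>" "w + T \<in> {p + \<tau>..p + \<tau> + T}"
    using \<open>t1 \<le> p\<close> \<tau>_pos p T by auto
  ultimately have "\<bar>err (w + T) j\<bar> \<le> (1 - \<rho> * \<beta>) * m"
    using err_level_persists[OF B _ _ \<beta>] by blast
  then show thesis
    using that[OF \<open>j \<notin> C\<close>] unfolding spread_gain_def \<beta>_def by (simp add: power2_eq_square ac_simps)
qed

definition round_gain :: "nat \<Rightarrow> real" where
  "round_gain q = spread_gain ^ q * (3/4 * pin_gain)"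

lemma round_gain_pos: "0 < round_gain q" and round_gain_le_1: "round_gain q \<le> 1"
proof -
  have "0 < spread_gain ^ q" "spread_gain ^ q \<le> 1"
    using spread_gain_pos spread_gain_le_\<rho> \<rho>_le_1 by (auto intro: power_le_one)
  moreover have "0 < 3/4 * pin_gain" "3/4 * pin_gain \<le> 1" using pin_gain_pos pin_gain_le_1 by auto
  ultimately show "0 < round_gain q" "round_gain q \<le> 1"
    unfolding round_gain_def using mult_le_one[of "spread_gain ^ q" "3/4 * pin_gain"] by auto
qed

lemma err_contracted_set_grows:
  assumes B: "bounded_from t1 m"
  shows "q < CARD('n) \<Longrightarrow> \<exists>C. S \<subseteq> C \<and> q + 1 \<le> card C \<and>
           (\<forall>l\<in>C. \<bar>err (t1 + real (q + 1) * T) l\<bar> \<le> (1 - round_gain q) * m)"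
proof (induction q)
  case 0
  have "t1 \<le> t1 + T - \<tau>" using \<tau>_le_T by simp
  then have "\<forall>l\<in>S. \<bar>err (t1 + T) l\<bar> \<le> (1 - round_gain 0) * m"
    using pinned_err_contracts[OF B, of "t1 + T - \<tau>"] unfolding round_gain_def by simp
  moreover have "1 \<le> card S" using S_nonempty by (simp add: Suc_le_eq card_gt_0_iff)
  ultimately show ?case by auto
next
  case (Suc q)
  then obtain C where C: "S \<subseteq> C" "q + 1 \<le> card C"
    "\<And>l. l \<in> C \<Longrightarrow> \<bar>err (t1 + real (q + 1) * T) l\<bar> \<le> (1 - round_gain q) * m" by auto
  define w where "w = t1 + real (q + 1) * T"
  have "t1 \<le> w" unfolding w_def using T by simp
  have wT: "w + T = t1 + real (Suc q + 1) * T" unfolding w_def by (simp add: algebra_simps)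
  have \<epsilon>: "0 \<le> round_gain q" "round_gain q \<le> 1"
    using round_gain_pos[of q] round_gain_le_1[of q] by auto
  have gain: "spread_gain * round_gain q = round_gain (Suc q)" unfolding round_gain_def by simp
  have C_level: "\<bar>err (w + T) l\<bar> \<le> (1 - round_gain (Suc q)) * m" if "l \<in> C" for l
  proof -
    have "\<bar>err (w + T) l\<bar> \<le> (1 - \<rho> * round_gain q) * m"
      using err_level_persists[OF B \<open>t1 \<le> w\<close> C(3)[OF that, folded w_def] \<epsilon>, of "w + T"] T by simp
    also have "\<dots> \<le> (1 - round_gain (Suc q)) * m"
      using spread_gain_le_\<rho> \<epsilon> bounded_fromD(2)[OF B] unfolding gain[symmetric]
      by (intro mult_right_mono) (auto intro: mult_right_mono)
    finally show ?thesis .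
  qed
  show ?case
  proof (cases "C = UNIV")
    case True
    then show ?thesis using C(1) \<open>Suc q < CARD('n)\<close> C_level wT by auto
  next
    case False
    then obtain j where j: "j \<notin> C" "\<bar>err (w + T) j\<bar> \<le> (1 - round_gain (Suc q)) * m"
      using err_level_spreads[OF B \<open>t1 \<le> w\<close> C(1) False C(3)[folded w_def] \<epsilon>] gain by metis
    have "Suc q + 1 \<le> card (insert j C)" using j(1) C(2) by simp
    then show ?thesis using C(1) j(2) C_level wT by (intro exI[of _ "insert j C"]) auto
  qed
qed

definition contraction :: real where
  "contraction = 1 - round_gain (CARD('n) - 1)"

lemma err_contracts_round:
  assumes B: "bounded_from t1 m"
  shows "\<bar>err (t1 + real CARD('n) * T) l\<bar> \<le> contraction * m"
proof -
  obtain C where C: "CARD('n) \<le> card C"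
    "\<And>l. l \<in> C \<Longrightarrow> \<bar>err (t1 + real CARD('n) * T) l\<bar> \<le> contraction * m"
    using err_contracted_set_grows[OF B, of "CARD('n) - 1"] unfolding contraction_def by auto
  have "card C \<le> CARD('n)" by (rule card_mono) auto
  then have "C = UNIV" using C(1) by (intro card_subset_eq) auto
  then show ?thesis using C(2) by blast
qed

lemma err_tendsto_zero: "((\<lambda>t. err t i) \<longlongrightarrow> 0) at_top"
proof -
  define L where "L = real CARD('n) * T"
  have "0 < L" unfolding L_def using T by simp
  have c: "0 \<le> contraction" "contraction < 1"
    unfolding contraction_def using round_gain_pos round_gain_le_1 by auto
  define m0 where "m0 = Max (range (\<lambda>l. \<bar>err t0 l\<bar>))"
  have "bounded_from t0 m0" unfolding m0_def by (intro bounded_fromI) auto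
  have bounded: "bounded_from (t0 + real n * L) (contraction ^ n * m0)" for n
  proof (induction n)
    case (Suc n)
    have "t0 \<le> t0 + real n * L + L" using \<open>0 < L\<close> by simp
    moreover have "\<bar>err (t0 + real n * L + L) l\<bar> \<le> contraction ^ Suc n * m0" for l
      using err_contracts_round[OF Suc] unfolding L_def by (simp add: ac_simps)
    ultimately show ?case by (intro bounded_fromI) (simp_all add: algebra_simps)
  qed (use \<open>bounded_from t0 m0\<close> in simp)
  show ?thesis
  proof (rule tendstoI)
    fix \<epsilon> :: real assume "0 < \<epsilon>"
    have "0 \<le> m0" using bounded_fromD(2)[OF \<open>bounded_from t0 m0\<close>] .
    obtain n where n: "contraction ^ n < \<epsilon> / (m0 + 1)"
      using real_arch_pow_inv[of "\<epsilon> / (m0 + 1)" contraction] \<open>0 < \<epsilon>\<close> \<open>0 \<le> m0\<close> c by auto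
    have "contraction ^ n * m0 \<le> contraction ^ n * (m0 + 1)"
      using c by (intro mult_left_mono) auto
    also have "\<dots> < \<epsilon>" using n \<open>0 \<le> m0\<close> by (simp add: field_simps)
    finally have "contraction ^ n * m0 < \<epsilon>" .
    then show "\<forall>\<^sub>F t in at_top. dist (err t i) 0 < \<epsilon>"
      using bounded_fromD(3)[OF bounded[of n]]
      by (intro eventually_at_top_linorderI[of "t0 + real n * L"]) (auto intro: le_less_trans)
  qed
qed

end

theorem theorem1:
  fixes a :: "'n::finite \<Rightarrow> 'n \<Rightarrow> real \<Rightarrow> real"
    and k :: "'n \<Rightarrow> real \<Rightarrow> real"
    and x :: "real \<Rightarrow> 'n \<Rightarrow> real"
    and xd :: "'n \<Rightarrow> real"
    and S :: "'n set"
    and t0 \<delta> T M0 \<kappa> :: real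
  assumes N2: "CARD('n) \<ge> 2"
    and t0: "t0 \<ge> 0"
    and delta: "\<delta> > 0"
    and A1: "\<And>i j t1 t2. {t \<in> {t1..t2}. \<not> isCont (a i j) t} \<in> null_sets lborel"
    and A2: "\<And>i t. a i i t = 0"
    and M0: "M0 > 0"
    and A3: "\<And>i j t1 t2. t1 \<le> t2 \<Longrightarrow>
               (\<lambda>s. a i j s) absolutely_integrable_on {t1..t2} \<and>
               integral {t1..t2} (\<lambda>s. \<bar>a i j s\<bar>) \<le> M0 * (t2 - t1)"
    and UQSC: "unif_quasi_strongly_connected a \<delta> T"
    and root: "\<And>t. t \<ge> 0 \<Longrightarrow> root_set (G_delta a \<delta> t (t + T)) S"
    and PSB: "persistently_structurally_balanced a \<delta> T S"
    and P1: "\<And>i. {t. t \<ge> t0 \<and> \<not> isCont (k i) t} \<in> null_sets lborel"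
    and P2: "\<kappa> > 0"
    and P2S: "\<And>i t. i \<in> S \<Longrightarrow> t \<ge> t0 \<Longrightarrow> k i t \<ge> \<kappa>"
    and P2N: "\<And>j t. j \<notin> S \<Longrightarrow> t \<ge> t0 \<Longrightarrow> k j t = 0"
    and sol: "carath_solution t0
               (\<lambda>t v i. - mat_vec (signed_lap a t) v i
                        + (mat_vec (signed_lap a t) xd i - k i t * (v i - xd i))) x"
  shows "\<forall>i. ((\<lambda>t. x t i) \<longlongrightarrow> xd i) at_top"
proof -
  have "0 < T" using UQSC unfolding unif_quasi_strongly_connected_def by blast
  then interpret pinned_network a k x xd S t0 \<delta> T M0 \<kappa>
    using A2 M0 A3 delta t0 root P2 P2S P2N sol by unfold_locales auto
  show ?thesis
    using err_tendsto_zero unfolding err_def by (blast intro: LIM_zero_cancel)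
qed

end
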